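(* Let $s>0$ and let $|FMSV\rangle$ be the four-mode state $$|FMSV\rangle=\frac{1}{\cosh s}\sum_{n=0}^\infty\sum_{r_1=0}^n\sum_{r_2=0}^n\sqrt{\binom{n}{r_1}}\sqrt{\binom{n}{r_2}}\Big(\tfrac12\tanh s\Big)^n|n-r_1\rangle_1|n-r_2\rangle_2|r_1\rangle_3|r_2\rangle_4,$$ where $|k\rangle_j$ is the $k$-photon Fock state of mode $j$. Let $\{j,j'\}$ be a pair of alternate modes, i.e. $\{j,j'\}=\{1,3\}$ or $\{j,j'\}=\{2,4\}$, and fix an integer $M\ge 0$. For nonnegative integers $m_j,m_{j'}$ with $m_j+m_{j'}=M$, let $|\psi^{sub}_{m_j,m_{j'}}\rangle$ be the normalized photon-subtracted state $a_j^{m_j}a_{j'}^{m_{j'}}|FMSV\rangle/\|a_j^{m_j}a_{j'}^{m_{j'}}|FMSV\rangle\|$ (no photons added to or subtracted from the other two modes), where $a_j$ is the annihilation operator of mode $j$. Then the generalized geometric measure $\mathcal G(|\psi^{sub}_{m_j,m_{j'}}\rangle)$ is independent of the split $(m_j,m_{j'})$, i.e. it depends only on $M$.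
   Context: The annihilation operator acts as $a|k\rangle=\sqrt{k}\,|k-1\rangle$ (so $a^m|k\rangle=\sqrt{k!/(k-m)!}\,|k-m\rangle$ for $k\ge m$ and $0$ otherwise). A four-mode pure state $|\chi\rangle$ is called non-genuinely multimode entangled if there is a bipartition of the modes $\{1,2,3,4\}=\mathcal A\cup\mathcal B$ into two disjoint nonempty sets with $|\chi\rangle=|\chi_{\mathcal A}\rangle\otimes|\chi_{\mathcal B}\rangle$; denote this set by $nG$. The generalized geometric measure (GGM) of a four-mode pure state is $\mathcal G(|\psi\rangle)=1-\sup_{|\chi\rangle\in nG}|\langle\chi|\psi\rangle|^2$. *)

theory Defs
  imports "HOL-Analysis.Analysis"
begin

text \<open>Four-mode pure states in the Fock basis: a state is its coefficient function on
occupation numbers (k1,k2,k3,k4), i.e. psi = sum_k psi(k) |k1>|k2>|k3>|k4>.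
Modes are numbered 1,2,3,4.\<close>

type_synonym idx4 = "nat \<times> nat \<times> nat \<times> nat"
type_synonym state4 = "idx4 \<Rightarrow> complex"

definition coord :: "nat \<Rightarrow> idx4 \<Rightarrow> nat" where
  "coord i k = (case k of (a, b, c, d) \<Rightarrow>
     (if i = 1 then a else if i = 2 then b else if i = 3 then c else d))"

definition bump :: "nat \<Rightarrow> nat \<Rightarrow> idx4 \<Rightarrow> idx4" where
  "bump i m k = (case k of (a, b, c, d) \<Rightarrow>
     (if i = 1 then (a + m, b, c, d) else if i = 2 then (a, b + m, c, d)
      else if i = 3 then (a, b, c + m, d) else (a, b, c, d + m)))"

definition ket4 :: "idx4 \<Rightarrow> state4" where
  "ket4 n = (\<lambda>k. if k = n then 1 else 0)"

text \<open>Annihilation operator of mode j, extended linearly from a|k> = sqrt k |k-1>: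
the coefficient of |k> in a_j psi is sqrt(k_j+1) times the coefficient of |k+e_j> in psi.\<close>
definition ann :: "nat \<Rightarrow> state4 \<Rightarrow> state4" where
  "ann j \<psi> = (\<lambda>k. complex_of_real (sqrt (real (coord j k + 1))) * \<psi> (bump j 1 k))"

definition l2norm :: "state4 \<Rightarrow> real" where
  "l2norm \<psi> = sqrt (infsum (\<lambda>k. (cmod (\<psi> k))\<^sup>2) UNIV)"

definition normalized :: "state4 \<Rightarrow> bool" where
  "normalized \<psi> \<longleftrightarrow> ((\<lambda>k. (cmod (\<psi> k))\<^sup>2) has_sum 1) UNIV"

definition normalize :: "state4 \<Rightarrow> state4" where
  "normalize \<psi> = (\<lambda>k. \<psi> k / complex_of_real (l2norm \<psi>))"

definition inner4 :: "state4 \<Rightarrow> state4 \<Rightarrow> complex" where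
  "inner4 \<phi> \<psi> = infsum (\<lambda>k. cnj (\<phi> k) * \<psi> k) UNIV"

definition depends_only :: "nat set \<Rightarrow> (idx4 \<Rightarrow> complex) \<Rightarrow> bool" where
  "depends_only A f \<longleftrightarrow> (\<forall>k k'. (\<forall>i\<in>A. coord i k = coord i k') \<longrightarrow> f k = f k')"

text \<open>Non-genuinely multimode entangled (normalized) pure states: product across some
bipartition {1,2,3,4} = A \<union> B into two disjoint nonempty sets.\<close>
definition nG :: "state4 set" where
  "nG = {\<phi>. normalized \<phi> \<and>
     (\<exists>A. A \<subseteq> {1..4} \<and> A \<noteq> {} \<and> A \<noteq> {1..4} \<and>
        (\<exists>g h. depends_only A g \<and> depends_only ({1..4} - A) h \<and> (\<forall>k. \<phi> k = g k * h k)))}"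

definition GGM :: "state4 \<Rightarrow> real" where
  "GGM \<psi> = 1 - (SUP \<phi>\<in>nG. (cmod (inner4 \<phi> \<psi>))\<^sup>2)"

definition fmsv :: "real \<Rightarrow> state4" where
  "fmsv s = (\<lambda>k. infsum (\<lambda>(n, r1, r2).
      complex_of_real (1 / cosh s * sqrt (real (n choose r1)) * sqrt (real (n choose r2))
                       * (tanh s / 2) ^ n)
      * ket4 (n - r1, n - r2, r1, r2) k)
    {(n, r1, r2). r1 \<le> n \<and> r2 \<le> n})"

definition psi_sub :: "real \<Rightarrow> nat \<Rightarrow> nat \<Rightarrow> nat \<Rightarrow> nat \<Rightarrow> state4" where
  "psi_sub s j j' mj mj' = normalize ((ann j ^^ mj) ((ann j' ^^ mj') (fmsv s)))"

end

theory Submission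
  imports Defs
begin

text \<open>The FMSV amplitude of \<open>|a,b,c,d>\<close> vanishes unless \<open>a + c = b + d\<close>, and then it is
\<open>sqrt ((a + c) choose c) * sqrt ((b + d) choose d)\<close> times a power of \<open>tanh s / 2\<close>.
Removing p photons from mode 1 and q from mode 3 reads off the amplitude at
\<open>(a + p, b, c + q, d)\<close> with the extra factor \<open>sqrt ((a + p)! / a!) * sqrt ((c + q)! / c!)\<close>,
and together with the binomial coefficient this collapses to
\<open>sqrt ((a + c + p + q)! / (a! c!))\<close>, which sees only \<open>p + q\<close>. Hence the unnormalised
subtracted states already coincide for all splits of M (for every s), and so do their GGMs.\<close>

definition two_mode_amp :: "nat \<Rightarrow> nat \<Rightarrow> nat \<Rightarrow> real" where
  "two_mode_amp m x y = sqrt (fact (x + y + m) / (fact x * fact y))"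

lemma two_mode_amp_0: "two_mode_amp 0 x y = sqrt (real ((x + y) choose y))"
  by (simp add: two_mode_amp_def binomial_fact mult.commute)

lemma two_mode_amp_shift:
  "sqrt (fact (x + p) / fact x) * sqrt (fact (y + q) / fact y) * two_mode_amp m (x + p) (y + q)
   = two_mode_amp (m + p + q) x y"
proof -
  have "fact (x + p) / fact x * (fact (y + q) / fact y)
          * (fact (x + p + (y + q) + m) / (fact (x + p) * fact (y + q)))
        = (fact (x + y + (m + p + q)) / (fact x * fact y) :: real)"
    by (simp add: ac_simps)
  then show ?thesis
    unfolding two_mode_amp_def by (metis real_sqrt_mult)
qed

lemma fmsv_apply:
  "fmsv s (a, b, c, d) =
     (if a + c = b + d
      then complex_of_real (two_mode_amp 0 a c * two_mode_amp 0 b d * (tanh s / 2) ^ (a + c) / cosh s)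
      else 0)"
proof -
  have "fmsv s (a, b, c, d) =
     (\<Sum>\<^sub>\<infinity>x\<in>(if a + c = b + d then {(a + c, c, d)} else {}).
        complex_of_real (1 / cosh s * sqrt (real ((a + c) choose c)) * sqrt (real ((a + c) choose d))
                         * (tanh s / 2) ^ (a + c)))"
    unfolding fmsv_def by (rule infsum_cong_neutral) (auto simp: ket4_def split: if_splits)
  then show ?thesis
    by (simp add: two_mode_amp_0)
qed

lemma coord_bump_same: "coord j (bump j m k) = coord j k + m"
  by (cases k) (simp add: coord_def bump_def)

lemma bump_bump_same: "bump j m (bump j p k) = bump j (p + m) k"
  by (cases k) (simp add: bump_def)

lemma bump_0: "bump j 0 k = k"
  by (cases k) (simp add: bump_def)

lemma funpow_ann_apply:
  "(ann j ^^ m) \<psi> k =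
     complex_of_real (sqrt (fact (coord j k + m) / fact (coord j k))) * \<psi> (bump j m k)"
proof (induction m arbitrary: k)
  case 0
  then show ?case by (simp add: bump_0)
next
  case (Suc m)
  let ?x = "coord j k"
  have "real (?x + 1) * (fact (?x + 1 + m) / fact (?x + 1)) = fact (?x + Suc m) / fact ?x"
    by (simp add: field_simps del: of_nat_Suc)
  then have "sqrt (real (?x + 1)) * sqrt (fact (?x + 1 + m) / fact (?x + 1))
             = sqrt (fact (?x + Suc m) / fact ?x)"
    by (metis real_sqrt_mult)
  moreover have "(ann j ^^ Suc m) \<psi> k = complex_of_real (sqrt (real (?x + 1)))
      * (complex_of_real (sqrt (fact (?x + 1 + m) / fact (?x + 1))) * \<psi> (bump j (Suc m) k))"
    unfolding funpow.simps comp_def ann_def Suc.IH coord_bump_same bump_bump_same by simp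
  ultimately show ?case
    by (metis mult.assoc of_real_mult)
qed

lemma fmsv_swap_pairs: "fmsv s (a, b, c, d) = fmsv s (b, a, d, c)"
  by (simp add: fmsv_apply ac_simps)

lemma fmsv_shift_13:
  "complex_of_real (sqrt (fact (a + p) / fact a) * sqrt (fact (c + q) / fact c))
     * fmsv s (a + p, b, c + q, d) =
   (if a + c + (p + q) = b + d
    then complex_of_real
           (two_mode_amp (p + q) a c * two_mode_amp 0 b d * (tanh s / 2) ^ (b + d) / cosh s)
    else 0)"
proof (cases "a + c + (p + q) = b + d")
  case True
  then have "a + p + (c + q) = b + d" by simp
  then have "complex_of_real (sqrt (fact (a + p) / fact a) * sqrt (fact (c + q) / fact c))
       * fmsv s (a + p, b, c + q, d) = complex_of_real
         (sqrt (fact (a + p) / fact a) * sqrt (fact (c + q) / fact c) * two_mode_amp 0 (a + p) (c + q)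
          * two_mode_amp 0 b d * (tanh s / 2) ^ (b + d) / cosh s)"
    by (simp add: fmsv_apply mult.assoc)
  with True show ?thesis
    by (simp add: two_mode_amp_shift)
qed (simp add: fmsv_apply)

lemma ann_pow_ann_pow_fmsv_13:
  assumes "{j, j'} = {1, 3}"
  shows "(ann j ^^ p) ((ann j' ^^ q) (fmsv s)) (a, b, c, d) =
     (if a + c + (p + q) = b + d
      then complex_of_real
             (two_mode_amp (p + q) a c * two_mode_amp 0 b d * (tanh s / 2) ^ (b + d) / cosh s)
      else 0)"
proof -
  from assms consider "j = 1" "j' = 3" | "j = 3" "j' = 1"
    by (auto simp: doubleton_eq_iff)
  then show ?thesis
  proof cases
    case 1
    then show ?thesis
      using fmsv_shift_13[of a p c q s b d]
      by (simp add: funpow_ann_apply coord_def bump_def mult.assoc)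
  next
    case 2
    then show ?thesis
      using fmsv_shift_13[of a q c p s b d]
      by (simp add: funpow_ann_apply coord_def bump_def ac_simps)
  qed
qed

lemma ann_pow_ann_pow_fmsv_24:
  assumes "{j, j'} = {2, 4}"
  shows "(ann j ^^ p) ((ann j' ^^ q) (fmsv s)) (a, b, c, d) =
     (if b + d + (p + q) = a + c
      then complex_of_real
             (two_mode_amp (p + q) b d * two_mode_amp 0 a c * (tanh s / 2) ^ (a + c) / cosh s)
      else 0)"
proof -
  from assms consider "j = 2" "j' = 4" | "j = 4" "j' = 2"
    by (auto simp: doubleton_eq_iff)
  then show ?thesis
  proof cases
    case 1
    then show ?thesis
      using fmsv_shift_13[of b p d q s a c]
      by (simp add: funpow_ann_apply coord_def bump_def fmsv_swap_pairs[of s a] mult.assoc)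
  next
    case 2
    then show ?thesis
      using fmsv_shift_13[of b q d p s a c]
      by (simp add: funpow_ann_apply coord_def bump_def fmsv_swap_pairs[of s a] ac_simps)
  qed
qed

lemma ann_pow_ann_pow_fmsv_eq:
  assumes "{j, j'} = {1, 3} \<or> {j, j'} = {2, 4}" and "p + q = p' + q'"
  shows "(ann j ^^ p) ((ann j' ^^ q) (fmsv s)) = (ann j ^^ p') ((ann j' ^^ q') (fmsv s))"
proof
  fix k :: idx4
  obtain a b c d where "k = (a, b, c, d)" by (cases k)
  with assms show "(ann j ^^ p) ((ann j' ^^ q) (fmsv s)) k = (ann j ^^ p') ((ann j' ^^ q') (fmsv s)) k"
    using ann_pow_ann_pow_fmsv_13 ann_pow_ann_pow_fmsv_24 by metis
qed

theorem theorem2: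
  fixes s :: real and j j' M m1 m2 n1 n2 :: nat
  assumes "s > 0"
    and "{j, j'} = {1, 3} \<or> {j, j'} = {2, 4}"
    and "m1 + m2 = M" and "n1 + n2 = M"
  shows "GGM (psi_sub s j j' m1 m2) = GGM (psi_sub s j j' n1 n2)"
proof -
  have "m1 + m2 = n1 + n2" using assms(3,4) by simp
  with assms(2) show ?thesis
    unfolding psi_sub_def by (metis ann_pow_ann_pow_fmsv_eq)
qed

end
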